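(* Let $G$ be a connected graph and let $v,w$ be vertices of $G$. Suppose there is a constant $c$ such that $|B_w(n+1)| < c\cdot |B_w(n)|$ for all $n\in\mathbb{N}$. If $G$ has 2-distinguishing density zero at $v$, then $G$ has 2-distinguishing density zero.
   Context: All graphs are simple (no loops or multiple edges) with vertex set $V$; $d$ is the graph distance. $B_x(r)=\{y\in V: d(x,y)\le r\}$ and $S_x(r)=\{y\in V: d(x,y)=r\}$. A 2-coloring $l:V\to\{\text{blue},\text{red}\}$ is preserved by an automorphism $g$ if $l(g(x))=l(x)$ for all $x\in V$; it is 2-distinguishing if the only automorphism of $G$ preserving it is the identity. Its color classes are $V_{\text{blue}}$ and $V_{\text{red}}$. For $W\subseteq V$ and $x\in V$, the density of $W$ at $x$ is $\delta_x(W):=\lim_{n\to\infty}\frac{|B_x(n)\cap W|}{|B_x(n)|}$ if the limit exists (with the conventions that a finite cardinal divided by an infinite cardinal is $0$ and a quotient of two infinite cardinals is undefined). If $\delta_x(W)$ exists for all $x\in V$, set $\delta(W):=\sup_{x\in V}\delta_x(W)$. For a 2-coloring $l$, $\delta_x(l):=\min\{\delta_x(V_{\text{blue}}),\delta_x(V_{\text{red}})\}$ and $\delta(l):=\min\{\delta(V_{\text{blue}}),\delta(V_{\text{red}})\}$. $G$ has 2-distinguishing density zero at $x$ if there is a 2-distinguishing coloring $l$ with $\delta_x(l)=0$; $G$ has 2-distinguishing density zero if there is a 2-distinguishing coloring $l$ with $\delta(l)=0$. *)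

theory Defs
  imports Complex_Main
begin

definition simple_graph :: "'a set \<Rightarrow> ('a \<Rightarrow> 'a \<Rightarrow> bool) \<Rightarrow> bool" where
  "simple_graph V E \<longleftrightarrow> (\<forall>x y. E x y \<longrightarrow> x \<in> V \<and> y \<in> V \<and> x \<noteq> y \<and> E y x)"

definition walk :: "('a \<Rightarrow> 'a \<Rightarrow> bool) \<Rightarrow> 'a \<Rightarrow> 'a \<Rightarrow> nat \<Rightarrow> bool" where
  "walk E x y n \<longleftrightarrow> (\<exists>p :: nat \<Rightarrow> 'a. p 0 = x \<and> p n = y \<and> (\<forall>i<n. E (p i) (p (Suc i))))"

definition connected_graph :: "'a set \<Rightarrow> ('a \<Rightarrow> 'a \<Rightarrow> bool) \<Rightarrow> bool" where
  "connected_graph V E \<longleftrightarrow> simple_graph V E \<and> V \<noteq> {} \<and> (\<forall>x\<in>V. \<forall>y\<in>V. \<exists>n. walk E x y n)"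

definition gdist :: "('a \<Rightarrow> 'a \<Rightarrow> bool) \<Rightarrow> 'a \<Rightarrow> 'a \<Rightarrow> nat" where
  "gdist E x y = (LEAST n. walk E x y n)"

definition gball :: "'a set \<Rightarrow> ('a \<Rightarrow> 'a \<Rightarrow> bool) \<Rightarrow> 'a \<Rightarrow> nat \<Rightarrow> 'a set" where
  "gball V E x r = {y \<in> V. (\<exists>n. walk E x y n) \<and> gdist E x y \<le> r}"

text \<open>The quotient |B_x(n) \<inter> W| / |B_x(n)| is defined unless both sets are infinite
  (finite / infinite = 0; infinite / infinite undefined).\<close>
definition dens_quot_defined :: "'a set \<Rightarrow> ('a \<Rightarrow> 'a \<Rightarrow> bool) \<Rightarrow> 'a \<Rightarrow> 'a set \<Rightarrow> nat \<Rightarrow> bool" where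
  "dens_quot_defined V E x W n \<longleftrightarrow> finite (gball V E x n) \<or> finite (gball V E x n \<inter> W)"

definition dens_quot :: "'a set \<Rightarrow> ('a \<Rightarrow> 'a \<Rightarrow> bool) \<Rightarrow> 'a \<Rightarrow> 'a set \<Rightarrow> nat \<Rightarrow> real" where
  "dens_quot V E x W n =
     (if finite (gball V E x n)
      then real (card (gball V E x n \<inter> W)) / real (card (gball V E x n))
      else 0)"

definition has_density :: "'a set \<Rightarrow> ('a \<Rightarrow> 'a \<Rightarrow> bool) \<Rightarrow> 'a \<Rightarrow> 'a set \<Rightarrow> real \<Rightarrow> bool" where
  "has_density V E x W d \<longleftrightarrow>
     (\<forall>n. dens_quot_defined V E x W n) \<and> (dens_quot V E x W \<longlonglongrightarrow> d)"

definition density_at :: "'a set \<Rightarrow> ('a \<Rightarrow> 'a \<Rightarrow> bool) \<Rightarrow> 'a \<Rightarrow> 'a set \<Rightarrow> real" where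
  "density_at V E x W = (THE d. has_density V E x W d)"

definition density_exists :: "'a set \<Rightarrow> ('a \<Rightarrow> 'a \<Rightarrow> bool) \<Rightarrow> 'a set \<Rightarrow> bool" where
  "density_exists V E W \<longleftrightarrow> (\<forall>x\<in>V. \<exists>d. has_density V E x W d)"

definition density :: "'a set \<Rightarrow> ('a \<Rightarrow> 'a \<Rightarrow> bool) \<Rightarrow> 'a set \<Rightarrow> real" where
  "density V E W = (SUP x\<in>V. density_at V E x W)"

text \<open>Colorings l : V -> {blue, red}, encoded as bool (True = blue, False = red).\<close>
definition blue_class :: "'a set \<Rightarrow> ('a \<Rightarrow> bool) \<Rightarrow> 'a set" where
  "blue_class V l = {x \<in> V. l x}"

definition red_class :: "'a set \<Rightarrow> ('a \<Rightarrow> bool) \<Rightarrow> 'a set" where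
  "red_class V l = {x \<in> V. \<not> l x}"

definition automorphism :: "'a set \<Rightarrow> ('a \<Rightarrow> 'a \<Rightarrow> bool) \<Rightarrow> ('a \<Rightarrow> 'a) \<Rightarrow> bool" where
  "automorphism V E g \<longleftrightarrow> bij_betw g V V \<and> (\<forall>x\<in>V. \<forall>y\<in>V. E x y \<longleftrightarrow> E (g x) (g y))"

definition preserves :: "'a set \<Rightarrow> ('a \<Rightarrow> 'a) \<Rightarrow> ('a \<Rightarrow> bool) \<Rightarrow> bool" where
  "preserves V g l \<longleftrightarrow> (\<forall>x\<in>V. l (g x) = l x)"

definition two_distinguishing :: "'a set \<Rightarrow> ('a \<Rightarrow> 'a \<Rightarrow> bool) \<Rightarrow> ('a \<Rightarrow> bool) \<Rightarrow> bool" where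
  "two_distinguishing V E l \<longleftrightarrow>
     (\<forall>g. automorphism V E g \<and> preserves V g l \<longrightarrow> (\<forall>x\<in>V. g x = x))"

definition coloring_density_zero_at :: "'a set \<Rightarrow> ('a \<Rightarrow> 'a \<Rightarrow> bool) \<Rightarrow> 'a \<Rightarrow> ('a \<Rightarrow> bool) \<Rightarrow> bool" where
  "coloring_density_zero_at V E x l \<longleftrightarrow>
     (\<exists>db dr. has_density V E x (blue_class V l) db \<and> has_density V E x (red_class V l) dr
              \<and> min db dr = 0)"

definition coloring_density_zero :: "'a set \<Rightarrow> ('a \<Rightarrow> 'a \<Rightarrow> bool) \<Rightarrow> ('a \<Rightarrow> bool) \<Rightarrow> bool" where
  "coloring_density_zero V E l \<longleftrightarrow>
     density_exists V E (blue_class V l) \<and> density_exists V E (red_class V l)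
     \<and> min (density V E (blue_class V l)) (density V E (red_class V l)) = 0"

definition two_dist_density_zero_at :: "'a set \<Rightarrow> ('a \<Rightarrow> 'a \<Rightarrow> bool) \<Rightarrow> 'a \<Rightarrow> bool" where
  "two_dist_density_zero_at V E x \<longleftrightarrow>
     (\<exists>l. two_distinguishing V E l \<and> coloring_density_zero_at V E x l)"

definition two_dist_density_zero :: "'a set \<Rightarrow> ('a \<Rightarrow> 'a \<Rightarrow> bool) \<Rightarrow> bool" where
  "two_dist_density_zero V E \<longleftrightarrow>
     (\<exists>l. two_distinguishing V E l \<and> coloring_density_zero V E l)"

end

theory Submission
  imports Defs
begin

text \<open>In a connected graph balls around different centres are nested up to a shift
  of the radius, B_x(n) \<subseteq> B_v(n + d(v,x)). Together with the exponential growth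
  bound at w this makes balls around x and v of comparable size,
  |B_v(n + s + d(v,x))| \<le> K |B_x(n + s)|, so the density quotient of a set W at x is
  at most K times a shifted density quotient at v. Hence if one colour class has
  density 0 at v, it has density 0 at every vertex, the other class has density 1
  at every vertex, and the coloring has global density zero.\<close>

lemma walk_refl: "walk E x x 0"
  unfolding walk_def by (rule exI[of _ "\<lambda>_. x"]) simp

lemma walk_append:
  assumes "walk E x y m" and "walk E y z n"
  shows "walk E x z (m + n)"
proof -
  obtain p where p: "p 0 = x" "p m = y" "\<forall>i<m. E (p i) (p (Suc i))"
    using assms(1) unfolding walk_def by blast
  obtain q where q: "q 0 = y" "q n = z" "\<forall>i<n. E (q i) (q (Suc i))"
    using assms(2) unfolding walk_def by blast
  define r where "r i = (if i \<le> m then p i else q (i - m))" for i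
  have "E (r i) (r (Suc i))" if "i < m + n" for i
  proof (cases "i < m")
    case True
    then show ?thesis using p by (simp add: r_def)
  next
    case False
    then have "r i = q (i - m)" "r (Suc i) = q (Suc (i - m))" "i - m < n"
      using p q \<open>i < m + n\<close> by (auto simp: r_def Suc_diff_le)
    then show ?thesis using q by simp
  qed
  moreover have "r 0 = x" "r (m + n) = z" using p q by (auto simp: r_def)
  ultimately show ?thesis unfolding walk_def by blast
qed

lemma walk_gdist: "\<exists>n. walk E x y n \<Longrightarrow> walk E x y (gdist E x y)"
  unfolding gdist_def by (rule LeastI_ex)

lemma gdist_le_walk: "walk E x y n \<Longrightarrow> gdist E x y \<le> n"
  unfolding gdist_def by (rule Least_le)

lemma center_in_gball: "x \<in> V \<Longrightarrow> x \<in> gball V E x n"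
  unfolding gball_def using walk_refl[of E x] gdist_le_walk[OF walk_refl, of E x] by auto

context
  fixes V :: "'a set" and E :: "'a \<Rightarrow> 'a \<Rightarrow> bool"
  assumes conn: "connected_graph V E"
begin

lemma gball_connected: "x \<in> V \<Longrightarrow> gball V E x n = {z \<in> V. gdist E x z \<le> n}"
  using conn unfolding gball_def connected_graph_def by blast

lemma gdist_triangle:
  assumes "x \<in> V" "y \<in> V" "z \<in> V"
  shows "gdist E x z \<le> gdist E x y + gdist E y z"
proof -
  have "walk E x y (gdist E x y)" "walk E y z (gdist E y z)"
    using assms conn by (auto simp: connected_graph_def intro!: walk_gdist)
  then show ?thesis by (intro gdist_le_walk walk_append)
qed

lemma gball_subset_gball:
  assumes "x \<in> V" "y \<in> V"
  shows "gball V E x n \<subseteq> gball V E y (n + gdist E y x)"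
  using gdist_triangle[OF assms(2,1)] assms by (fastforce simp: gball_connected)

lemma finite_gball:
  assumes "w \<in> V" "\<forall>n. finite (gball V E w n)" "x \<in> V"
  shows "finite (gball V E x n)"
  using gball_subset_gball[OF assms(3,1)] assms(2) finite_subset by blast

lemma card_gball_pos: "finite (gball V E x n) \<Longrightarrow> x \<in> V \<Longrightarrow> card (gball V E x n) > 0"
  using center_in_gball by (metis card_gt_0_iff empty_iff)

end

definition ball_growth_bounded ::
    "'a set \<Rightarrow> ('a \<Rightarrow> 'a \<Rightarrow> bool) \<Rightarrow> 'a \<Rightarrow> real \<Rightarrow> bool" where
  "ball_growth_bounded V E w c \<longleftrightarrow>
     (\<forall>n. finite (gball V E w n) \<and>
          real (card (gball V E w (Suc n))) < c * real (card (gball V E w n)))"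

lemma finite_gball_if_growth_bounded:
  assumes "connected_graph V E" "w \<in> V" "ball_growth_bounded V E w c" "x \<in> V"
  shows "finite (gball V E x n)"
  using finite_gball[OF assms(1,2) _ assms(4)] assms(3) by (auto simp: ball_growth_bounded_def)

lemma power_growth_bound:
  fixes f :: "nat \<Rightarrow> real"
  assumes step: "\<And>n. f (Suc n) \<le> c * f n" and "c \<ge> 0"
  shows "f (n + m) \<le> c ^ m * f n"
proof (induction m)
  case (Suc m)
  have "f (n + Suc m) \<le> c * f (n + m)" using step by simp
  also have "\<dots> \<le> c * (c ^ m * f n)" using Suc \<open>c \<ge> 0\<close> by (rule mult_left_mono)
  finally show ?case by simp
qed simp

lemma card_gball_comparable:
  fixes c :: real
  assumes conn: "connected_graph V E" and "w \<in> V" "x \<in> V" "v \<in> V"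
    and growth: "ball_growth_bounded V E w c"
  obtains K s where
    "\<And>n. real (card (gball V E v (n + s + gdist E v x))) \<le> K * real (card (gball V E x (n + s)))"
proof -
  have fin: "finite (gball V E y n)" if "y \<in> V" for y n
    using finite_gball_if_growth_bounded[OF conn \<open>w \<in> V\<close> growth that] .
  have "real (card (gball V E w 1)) < c * real (card (gball V E w 0))"
    using growth by (simp add: ball_growth_bounded_def)
  then have "c > 0"
    using card_gball_pos[OF conn fin[OF \<open>w \<in> V\<close>] \<open>w \<in> V\<close>, of 0]
    by (smt (verit) mult_nonpos_nonneg of_nat_0_le_iff)
  define s where "s = gdist E x w"
  define k where "k = s + gdist E v x + gdist E w v"
  have "real (card (gball V E v (n + s + gdist E v x))) \<le> c ^ k * real (card (gball V E x (n + s)))"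
    for n
  proof -
    have "gball V E v (n + s + gdist E v x) \<subseteq> gball V E w (n + k)"
      using gball_subset_gball[OF conn \<open>v \<in> V\<close> \<open>w \<in> V\<close>, of "n + s + gdist E v x"]
      by (simp add: k_def add.assoc)
    then have "card (gball V E v (n + s + gdist E v x)) \<le> card (gball V E w (n + k))"
      using fin[OF \<open>w \<in> V\<close>] by (rule card_mono[rotated])
    also have "real (card (gball V E w (n + k))) \<le> c ^ k * real (card (gball V E w n))"
      using growth \<open>c > 0\<close>
      by (intro power_growth_bound) (auto simp: ball_growth_bounded_def less_imp_le)
    also have "card (gball V E w n) \<le> card (gball V E x (n + s))"
      using gball_subset_gball[OF conn \<open>w \<in> V\<close> \<open>x \<in> V\<close>] fin[OF \<open>x \<in> V\<close>]
      by (simp add: s_def card_mono)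
    finally show ?thesis using \<open>c > 0\<close> by (simp add: mult_left_mono)
  qed
  then show thesis by (rule that)
qed

lemma dens_quot_nonneg: "dens_quot V E x W n \<ge> 0"
  by (simp add: dens_quot_def)

lemma divide_le_mult_divide:
  fixes a b c d k :: real
  assumes "0 \<le> a" "a \<le> c" "d \<le> k * b" "b > 0" "d > 0"
  shows "a / b \<le> k * (c / d)"
proof -
  have "a * d \<le> c * (k * b)"
    using assms by (meson mult_mono order.trans order_less_imp_le)
  then show ?thesis using assms(4,5) by (simp add: field_simps)
qed

lemma has_density_zero_everywhere:
  fixes c :: real
  assumes conn: "connected_graph V E" and "v \<in> V" "w \<in> V" "x \<in> V"
    and growth: "ball_growth_bounded V E w c"
    and hv: "has_density V E v W 0"
  shows "has_density V E x W 0"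
proof -
  have fin: "finite (gball V E y n)" if "y \<in> V" for y n
    using finite_gball_if_growth_bounded[OF conn \<open>w \<in> V\<close> growth that] .
  obtain K s where comparable:
    "\<And>n. real (card (gball V E v (n + s + gdist E v x))) \<le> K * real (card (gball V E x (n + s)))"
    using card_gball_comparable[OF conn \<open>w \<in> V\<close> \<open>x \<in> V\<close> \<open>v \<in> V\<close> growth] by blast
  define t where "t = gdist E v x"
  let ?q = "dens_quot V E"
  have bound: "?q x W (n + s) \<le> K * ?q v W (n + s + t)" for n
  proof -
    let ?Bx = "gball V E x (n + s)" and ?Bv = "gball V E v (n + s + t)"
    have "card (?Bx \<inter> W) \<le> card (?Bv \<inter> W)"
      using gball_subset_gball[OF conn \<open>x \<in> V\<close> \<open>v \<in> V\<close>] fin[OF \<open>v \<in> V\<close>]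
      by (intro card_mono) (auto simp: t_def)
    moreover have "real (card ?Bv) \<le> K * real (card ?Bx)" using comparable by (simp add: t_def)
    moreover have "card ?Bx > 0" "card ?Bv > 0"
      using card_gball_pos[OF conn fin] \<open>x \<in> V\<close> \<open>v \<in> V\<close> by auto
    ultimately have "real (card (?Bx \<inter> W)) / card ?Bx \<le> K * (real (card (?Bv \<inter> W)) / card ?Bv)"
      by (intro divide_le_mult_divide) auto
    then show ?thesis using fin \<open>x \<in> V\<close> \<open>v \<in> V\<close> by (simp add: dens_quot_def)
  qed
  have majorant: "(\<lambda>n. K * ?q v W (n + s + t)) \<longlonglongrightarrow> 0"
    using hv LIMSEQ_ignore_initial_segment[of "?q v W" 0 "s + t"]
    by (auto simp: has_density_def add.assoc intro: tendsto_mult_right_zero)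
  have "(\<lambda>n. ?q x W (n + s)) \<longlonglongrightarrow> 0"
    by (rule tendsto_sandwich[OF _ _ tendsto_const majorant]) (auto simp: bound dens_quot_nonneg)
  then show ?thesis
    using fin[OF \<open>x \<in> V\<close>] LIMSEQ_offset unfolding has_density_def dens_quot_defined_def by blast
qed

lemma has_density_complement:
  assumes "\<forall>n. finite (gball V E x n)" "x \<in> V" "has_density V E x W d"
  shows "has_density V E x (V - W) (1 - d)"
proof -
  have "dens_quot V E x (V - W) = (\<lambda>n. 1 - dens_quot V E x W n)"
  proof
    fix n
    let ?B = "gball V E x n"
    have "?B \<inter> (V - W) = ?B - ?B \<inter> W" by (auto simp: gball_def)
    then have "card (?B \<inter> (V - W)) = card ?B - card (?B \<inter> W)"
      using assms(1) by (simp add: card_Diff_subset)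
    moreover have "card (?B \<inter> W) \<le> card ?B" using assms(1) by (simp add: card_mono)
    moreover have "?B \<noteq> {}" using center_in_gball[OF assms(2)] by blast
    ultimately show "dens_quot V E x (V - W) n = 1 - dens_quot V E x W n"
      using assms(1) by (simp add: dens_quot_def of_nat_diff diff_divide_distrib)
  qed
  moreover have "(\<lambda>n. 1 - dens_quot V E x W n) \<longlonglongrightarrow> 1 - d"
    using assms(3) unfolding has_density_def by (intro tendsto_diff tendsto_const) auto
  ultimately show ?thesis using assms(1) unfolding has_density_def dens_quot_defined_def by simp
qed

lemma density_at_eq: "has_density V E x W d \<Longrightarrow> density_at V E x W = d"
  unfolding density_at_def by (rule the_equality) (auto simp: has_density_def intro: LIMSEQ_unique)

lemma density_eq_const:
  assumes "V \<noteq> {}" "\<And>x. x \<in> V \<Longrightarrow> has_density V E x W d"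
  shows "density_exists V E W" "density V E W = d"
proof -
  show "density_exists V E W" using assms(2) by (auto simp: density_exists_def)
  have "density V E W = (SUP x\<in>V. d)"
    unfolding density_def by (rule SUP_cong) (auto simp: assms(2) density_at_eq)
  then show "density V E W = d" using assms(1) by simp
qed

lemma density_zero_and_complement_one:
  fixes c :: real
  assumes conn: "connected_graph V E" and "v \<in> V" "w \<in> V"
    and growth: "ball_growth_bounded V E w c"
    and "has_density V E v W 0"
  shows "density_exists V E W" "density V E W = 0"
    and "density_exists V E (V - W)" "density V E (V - W) = 1"
proof -
  have zero: "has_density V E x W 0" if "x \<in> V" for x
    using has_density_zero_everywhere[OF conn \<open>v \<in> V\<close> \<open>w \<in> V\<close> that growth] assms(5) .
  have "has_density V E x (V - W) 1" if "x \<in> V" for x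
    using has_density_complement[OF _ that zero[OF that]]
      finite_gball_if_growth_bounded[OF conn \<open>w \<in> V\<close> growth that] by simp
  with zero \<open>v \<in> V\<close> show "density_exists V E W" "density V E W = 0"
    "density_exists V E (V - W)" "density V E (V - W) = 1"
    by (auto intro: density_eq_const)
qed

theorem lemma2p1:
  fixes V :: "'a set" and E :: "'a \<Rightarrow> 'a \<Rightarrow> bool" and v w :: 'a and c :: real
  assumes "connected_graph V E"
    and "v \<in> V" and "w \<in> V"
    and "\<forall>n. finite (gball V E w n) \<and>
             real (card (gball V E w (Suc n))) < c * real (card (gball V E w n))"
    and "two_dist_density_zero_at V E v"
  shows "two_dist_density_zero V E"
proof -
  obtain l db dr where l: "two_distinguishing V E l"
    and blue: "has_density V E v (blue_class V l) db"
    and red: "has_density V E v (red_class V l) dr" and "min db dr = 0"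
    using assms(5) unfolding two_dist_density_zero_at_def coloring_density_zero_at_def by blast
  have growth: "ball_growth_bounded V E w c"
    using assms(4) unfolding ball_growth_bounded_def .
  have classes: "red_class V l = V - blue_class V l" "blue_class V l = V - red_class V l"
    by (auto simp: red_class_def blue_class_def)
  have "coloring_density_zero V E l"
  proof (cases "db = 0")
    case True
    then show ?thesis
      using density_zero_and_complement_one[OF assms(1-3) growth blue[unfolded True]] classes(1)
      by (simp add: coloring_density_zero_def)
  next
    case False
    with \<open>min db dr = 0\<close> have "dr = 0" by (simp add: min_def split: if_splits)
    then show ?thesis
      using density_zero_and_complement_one[OF assms(1-3) growth red[unfolded \<open>dr = 0\<close>]] classes(2)
      by (simp add: coloring_density_zero_def)
  qed
  with l show ?thesis unfolding two_dist_density_zero_def by blast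
qed

end
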